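(* For $n\in\mathbb{N}$ let \[ b_n:=\frac{\sum_{k=1}^n\frac1k}{2-\sum_{k=1}^n\frac1{k2^k}},\qquad \mu_n:=\frac1{2n2^n},\qquad \beta_n:=1-\sum_{k=1}^n\mu_k. \] For every $N\in\mathbb{N}$ and every $\delta>0$ there exist open sets $\Omega_{B_N},\Omega_{G_1},\dots,\Omega_{G_N}\subset[0,1]$ with \[ [0,1]=\bigcup_{k=1}^N\Omega_{G_k}\cup\Omega_{B_N}\cup\mathcal{N} \] for some set $\mathcal{N}$ of one-dimensional Hausdorff measure zero, a piecewise affine (Lipschitz) function $u:[0,1]\to\mathbb{R}$ with $u(0)=u(1)=0$ and $\|u\|_{L^\infty}\le\delta$, and a piecewise constant function $w:[0,1]\to(0,\infty)$, such that \[ |\Omega_{B_N}|=\beta_N,\qquad |\Omega_{G_k}|=\mu_k\quad(k=1,\dots,N), \] \[ w=2^{-k},\ u'=-2^k\ \text{a.e. on }\Omega_{G_k},\qquad w=1,\ u'=b_N\ \text{a.e. on }\Omega_{B_N}. \] Furthermore, if $u$ and $w$ are extended to $\mathbb{R}$ by $u\equiv0$ and $w\equiv1$ on $\mathbb{R}\setminus[0,1]$, then for every $r>2$ there is a constant $C(r)$, independent of $N$ (and $\delta$), such that for every interval $Q\subset\mathbb{R}$, \[ \left(\frac1{|Q|}\int_Q w\right)\left(\frac1{|Q|}\int_Q w^{-\frac1{r-1}}\right)^{r-1}\le C(r). \]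
   Context: $|\cdot|$ denotes one-dimensional Lebesgue measure; cubes in $\mathbb{R}$ are intervals. *)

theory Defs
  imports "HOL-Analysis.Analysis"
begin

definition b_seq :: "nat \<Rightarrow> real" where
  "b_seq n = (\<Sum>k=1..n. 1 / real k) / (2 - (\<Sum>k=1..n. 1 / (real k * 2 ^ k)))"

definition mu_seq :: "nat \<Rightarrow> real" where
  "mu_seq n = 1 / (2 * real n * 2 ^ n)"

definition beta_seq :: "nat \<Rightarrow> real" where
  "beta_seq n = 1 - (\<Sum>k=1..n. mu_seq k)"

definition piecewise_affine_on :: "real \<Rightarrow> real \<Rightarrow> (real \<Rightarrow> real) \<Rightarrow> bool" where
  "piecewise_affine_on a b f \<longleftrightarrow>
     (\<exists>S. finite S \<and> a \<in> S \<and> b \<in> S \<and> S \<subseteq> {a..b} \<and>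
        (\<forall>x\<in>S. \<forall>y\<in>S. x < y \<and> {x<..<y} \<inter> S = {} \<longrightarrow>
           (\<exists>m c. \<forall>t\<in>{x..y}. f t = m * t + c)))"

definition piecewise_constant_on :: "real \<Rightarrow> real \<Rightarrow> (real \<Rightarrow> real) \<Rightarrow> bool" where
  "piecewise_constant_on a b f \<longleftrightarrow>
     (\<exists>S. finite S \<and> a \<in> S \<and> b \<in> S \<and> S \<subseteq> {a..b} \<and>
        (\<forall>x\<in>S. \<forall>y\<in>S. x < y \<and> {x<..<y} \<inter> S = {} \<longrightarrow>
           (\<exists>c. \<forall>t\<in>{x<..<y}. f t = c)))"

end

theory Submission
  imports Defs
begin

(* For t >= 0, level N t is the k with threshold N k <= t < threshold N (k - 1) (and 0 above
   threshold N 0), where threshold N j = (mu_(j+1) + ... + mu_N) / 2; so the set of t in [0, 1/2]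
   of level k has length mu_k / 2.  Composing with the distance to Z + 1/2 and rescaling by M splits
   each of the M cells of [0, 1] into the sets where w = 2^-k, u' = -2^k (level k >= 1) and where
   w = 1, u' = b_N (level 0).  The value b_N is exactly the one for which u' has mean zero on every
   cell, so u vanishes at the cell endpoints and |u| <= (|b_N| + 2^N) / M, which is below delta for
   large M.

   The A_r quotient is invariant under dilations, so it suffices to bound it for the weight on M
   unit cells.  Since threshold N j is of order 2^-j / j, halving the distance to a cell centre
   raises the level by at most one, and for p = 2^(1/(r-1)) < 2 (this is where r > 2 enters) the
   tail sums give integral_0^rho p^level <= C rho p^(level rho).  Intervals whose distance to the
   centre exceeds their length see w constant up to a factor 2, intervals close to the centre are
   controlled by the integral bound, and intervals longer than 1/8 by periodicity. *)

section \<open>Integrals on the real line\<close>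

lemma has_integral_constant_on_open_interval:
  fixes f :: "real \<Rightarrow> real"
  assumes "a \<le> b" "\<And>t. a < t \<Longrightarrow> t < b \<Longrightarrow> f t = c"
  shows "(f has_integral c * (b - a)) {a..b}"
proof -
  have "((\<lambda>t. c) has_integral c * (b - a)) {a..b}"
    using has_integral_const_real[of c a b] assms(1) by (simp add: mult.commute)
  then show ?thesis
    by (rule has_integral_spike_finite[of "{a, b}", rotated 2]) (use assms in auto)
qed

lemma has_integral_indicator_between:
  fixes a b c d :: real
  assumes "c \<le> d" "{c..d} \<subseteq> {a..b}" "{c<..<d} \<subseteq> I" "I \<inter> {a..b} \<subseteq> {c..d}"
  shows "(indicator I has_integral d - c) {a..b}"
proof -
  have "((\<lambda>x. 1::real) has_integral d - c) (cbox c d)"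
    using has_integral_const_real[of "1::real" c d] assms(1) by simp
  from has_integral_restrict_closed_subinterval[OF this] assms(2)
  have "((\<lambda>x. if x \<in> {c..d} then 1 else 0) has_integral d - c) {a..b}" by simp
  then show ?thesis
    by (rule has_integral_spike_finite[of "{c, d}", rotated 2])
      (use assms(3,4) in \<open>auto simp: indicator_def\<close>)
qed

lemma integrable_on_if_Icc:
  fixes h :: "real \<Rightarrow> real"
  assumes "h integrable_on {c..d}"
  shows "(\<lambda>y. if y \<in> {c..d} then h y else k) integrable_on {a..b}"
proof -
  have "(\<lambda>y. h y - k) integrable_on {c..d}"
    using assms by (intro integrable_diff integrable_const_ivl)
  then have "(\<lambda>y. h y - k) integrable_on {max c a..min d b}"
    by (rule integrable_subinterval_real) auto
  then have "(\<lambda>y. h y - k) integrable_on {c..d} \<inter> {a..b}"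
    by (simp add: Int_atLeastAtMost sup_max inf_min)
  then have "(\<lambda>y. if y \<in> {c..d} then h y - k else 0) integrable_on {a..b}"
    by (simp only: integrable_restrict_Int)
  then have "(\<lambda>y. (if y \<in> {c..d} then h y - k else 0) + k) integrable_on {a..b}"
    by (intro integrable_add integrable_const_ivl)
  then show ?thesis
    by (rule integrable_eq) simp
qed

lemma has_integral_abs_diff:
  fixes f :: "real \<Rightarrow> real"
  assumes "(f has_integral J) {0..D}" "0 \<le> D"
  shows "((\<lambda>y. f \<bar>y - c\<bar>) has_integral 2 * J) {c - D..c + D}"
proof -
  have "((\<lambda>y. f (y - c)) has_integral J) {c..c + D}"
    using has_integral_shift_cbox[OF assms(1)[unfolded box_real(2)[symmetric]], of "- c"]
    by (simp add: add.commute)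
  then have right: "((\<lambda>y. f \<bar>y - c\<bar>) has_integral J) {c..c + D}"
    by (rule has_integral_eq[rotated]) simp
  have "((\<lambda>y. f (- y)) has_integral J) {- D..0}"
    using has_integral_reflect_real[where f=f and a=0 and b=D] assms(1) by simp
  then have "((\<lambda>y. f (- (y - c))) has_integral J) {c - D..c}"
    using has_integral_shift_cbox[of "\<lambda>y. f (- y)" J "- D" 0 "- c"] by simp
  then have left: "((\<lambda>y. f \<bar>y - c\<bar>) has_integral J) {c - D..c}"
    by (rule has_integral_eq[rotated]) simp
  show ?thesis
    using has_integral_combine[OF _ _ left right] assms(2) by simp
qed

section \<open>Thresholds and levels\<close>

definition threshold :: "nat \<Rightarrow> nat \<Rightarrow> real" where
  "threshold N j = (\<Sum>i\<in>{j<..N}. mu_seq i) / 2"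

definition level :: "nat \<Rightarrow> real \<Rightarrow> nat" where
  "level N t = card {j\<in>{1..N}. t < threshold N (j - 1)}"

lemma mu_seq_pos: "1 \<le> k \<Longrightarrow> 0 < mu_seq k"
  by (simp add: mu_seq_def)

lemma sum_power_greaterThanAtMost_le:
  fixes q :: real
  assumes "0 \<le> q" "q < 1"
  shows "(\<Sum>i\<in>{K<..N}. q ^ i) \<le> q ^ Suc K / (1 - q)"
proof (cases "K < N")
  case True
  have "{K<..N} = {Suc K..N}" by auto
  then have "(\<Sum>i\<in>{K<..N}. q ^ i) = (q ^ Suc K - q ^ Suc N) / (1 - q)"
    using True assms by (simp add: sum_gp)
  then show ?thesis
    using assms by (simp add: divide_right_mono)
qed (use assms in simp)

lemma threshold_nonneg: "0 \<le> threshold N j"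
  unfolding threshold_def by (intro divide_nonneg_pos sum_nonneg) (auto simp: mu_seq_def)

lemma threshold_self [simp]: "threshold N N = 0"
  by (simp add: threshold_def)

lemma threshold_Suc:
  assumes "j < N"
  shows "threshold N j = threshold N (Suc j) + mu_seq (Suc j) / 2"
proof -
  have "{j<..N} = insert (Suc j) {Suc j<..N}" using assms by auto
  then show ?thesis unfolding threshold_def by (simp add: add_divide_distrib)
qed

lemma threshold_antimono: "i \<le> j \<Longrightarrow> threshold N j \<le> threshold N i"
  unfolding threshold_def
  by (intro divide_right_mono sum_mono2) (auto simp: mu_seq_def)

lemma threshold_ge_mu_seq: "j < N \<Longrightarrow> mu_seq (Suc j) / 2 \<le> threshold N j"
  using threshold_Suc[of j N] threshold_nonneg[of N "Suc j"] by simp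

lemma threshold_le: "threshold N j \<le> (1/2) ^ j / (4 * (real j + 1))"
proof -
  have "(\<Sum>i\<in>{j<..N}. mu_seq i) \<le> (\<Sum>i\<in>{j<..N}. (1/2) ^ i / (2 * (real j + 1)))"
  proof (rule sum_mono)
    fix i assume "i \<in> {j<..N}"
    then have "2 * (real j + 1) * 2 ^ i \<le> 2 * real i * 2 ^ i" by simp
    then have "1 / (2 * real i * 2 ^ i) \<le> 1 / (2 * (real j + 1) * 2 ^ i)"
      by (intro divide_left_mono) auto
    then show "mu_seq i \<le> (1/2) ^ i / (2 * (real j + 1))"
      unfolding mu_seq_def by (simp add: power_one_over mult.commute)
  qed
  also have "\<dots> = (\<Sum>i\<in>{j<..N}. (1/2::real) ^ i) / (2 * (real j + 1))"
    by (simp add: sum_divide_distrib)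
  also have "\<dots> \<le> (1/2) ^ j / (2 * (real j + 1))"
    using sum_power_greaterThanAtMost_le[of "1/2" j N] by (intro divide_right_mono) auto
  finally have "(\<Sum>i\<in>{j<..N}. mu_seq i) / 2 \<le> (1/2) ^ j / (2 * (real j + 1)) / 2"
    by (rule divide_right_mono) simp
  also have "\<dots> = (1/2) ^ j / (4 * (real j + 1))" by simp
  finally show ?thesis unfolding threshold_def .
qed

lemma threshold_zero_le: "threshold N 0 \<le> 1/4"
  using threshold_le[of N 0] by simp

lemma threshold_double:
  assumes j: "1 \<le> j" "j \<le> N"
  shows "2 * threshold N j \<le> threshold N (j - 1)"
proof -
  have "threshold N j \<le> (1/2) ^ j / (4 * (real j + 1))" by (rule threshold_le)
  also have "\<dots> \<le> (1/2) ^ j / (4 * real j)"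
    using j by (intro divide_left_mono) auto
  also have "\<dots> = mu_seq j / 2" by (simp add: mu_seq_def power_one_over)
  finally show ?thesis using threshold_Suc[of "j - 1" N] j by simp
qed

lemma level_ge_iff:
  assumes "1 \<le> j" "j \<le> N"
  shows "j \<le> level N t \<longleftrightarrow> t < threshold N (j - 1)"
proof -
  define A where "A = {j\<in>{1..N}. t < threshold N (j - 1)}"
  have down: "i \<in> A" if "i' \<in> A" "1 \<le> i" "i \<le> i'" for i i'
    using that threshold_antimono[of "i - 1" "i' - 1" N] unfolding A_def by force
  show ?thesis
  proof
    assume "j \<le> level N t"
    show "t < threshold N (j - 1)"
    proof (rule ccontr)
      assume "\<not> t < threshold N (j - 1)"
      then have "j \<notin> A" unfolding A_def by simp
      then have "A \<subseteq> {1..j - 1}"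
        using down[of _ j] assms unfolding A_def by fastforce
      then have "card A \<le> j - 1" using card_mono[of "{1..j - 1}" A] by simp
      then show False using \<open>j \<le> level N t\<close> assms unfolding level_def A_def by simp
    qed
  next
    assume "t < threshold N (j - 1)"
    then have "{1..j} \<subseteq> A" using down[of j] assms unfolding A_def by auto
    then show "j \<le> level N t" using card_mono[of A "{1..j}"] unfolding level_def A_def by simp
  qed
qed

lemma level_le: "level N t \<le> N"
proof -
  have "level N t \<le> card {1..N}"
    unfolding level_def by (intro card_mono) auto
  then show ?thesis by simp
qed

lemma level_pos_imp_less: "1 \<le> level N t \<Longrightarrow> t < threshold N (level N t - 1)"
  using level_ge_iff[of "level N t" N t] level_le[of N t] by simp

lemma threshold_level_le: "0 \<le> t \<Longrightarrow> threshold N (level N t) \<le> t"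
  using level_ge_iff[of "Suc (level N t)" N t] level_le[of N t]
  by (cases "level N t = N") auto

lemma level_le_if_threshold_le: "threshold N k \<le> t \<Longrightarrow> level N t \<le> k"
  using level_ge_iff[of "Suc k" N t] level_le[of N t] by (cases "k < N") auto

lemma level_eqI:
  assumes "k \<le> N" "threshold N k \<le> t" "k = 0 \<or> t < threshold N (k - 1)"
  shows "level N t = k"
proof -
  have "\<not> Suc k \<le> level N t"
    using level_ge_iff[of "Suc k" N t] level_le[of N t] assms(1,2) by auto
  moreover have "k \<le> level N t"
    using level_ge_iff[of k N t] assms(1,3) by (cases "k = 0") auto
  ultimately show ?thesis by simp
qed

lemma level_eq_0: "threshold N 0 \<le> t \<Longrightarrow> level N t = 0"
  using level_eqI[of 0 N t] by simp

lemma level_antimono: "t \<le> t' \<Longrightarrow> level N t' \<le> level N t"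
  using level_pos_imp_less[of N t'] level_ge_iff[of "level N t'" N t] level_le[of N t']
  by (cases "level N t' = 0") auto

lemma level_le_level_double: "level N t \<le> Suc (level N (2 * t))"
proof (cases "2 \<le> level N t")
  case True
  define k where "k = level N t"
  have "2 * t < 2 * threshold N (k - 1)"
    using level_pos_imp_less[of N t] True unfolding k_def by simp
  also have "\<dots> \<le> threshold N (k - 1 - 1)"
    using threshold_double[of "k - 1" N] True level_le[of N t] unfolding k_def by simp
  finally have "k - 1 \<le> level N (2 * t)"
    using level_ge_iff[of "k - 1" N "2 * t"] True level_le[of N t] unfolding k_def by simp
  then show ?thesis unfolding k_def by simp
qed auto

lemma level_eq_if_connected:
  assumes "connected S" "continuous_on S g" "\<And>x j. x \<in> S \<Longrightarrow> j \<le> N \<Longrightarrow> g x \<noteq> threshold N j"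
    and "x \<in> S" "y \<in> S"
  shows "level N (g x) = level N (g y)"
proof -
  have "g x < threshold N j \<longleftrightarrow> g y < threshold N j" if "j \<le> N" for j
  proof -
    have image: "connected (g ` S)" by (rule connected_continuous_image[OF assms(2,1)])
    have "threshold N j \<notin> g ` S" by (metis assms(3) image_iff that)
    moreover have "g x \<in> g ` S" "g y \<in> g ` S" using assms(4,5) by auto
    ultimately show ?thesis
      using connectedD_interval[OF image, of "g x" "g y" "threshold N j"]
        connectedD_interval[OF image, of "g y" "g x" "threshold N j"]
      by (meson less_imp_le not_less)
  qed
  then have "{j\<in>{1..N}. g x < threshold N (j - 1)} = {j\<in>{1..N}. g y < threshold N (j - 1)}"
    by auto
  then show ?thesis unfolding level_def by simp
qed

lemma has_integral_level_below:
  fixes F :: "nat \<Rightarrow> real"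
  assumes "m \<le> N"
  shows "((\<lambda>t. F (level N t)) has_integral (\<Sum>j\<in>{m<..N}. F j * mu_seq j / 2)) {0..threshold N m}"
  using assms
proof (induction m rule: inc_induct)
  case base
  then show ?case by (simp add: has_integral_refl)
next
  case (step m)
  have "((\<lambda>t. F (level N t)) has_integral F (Suc m) * (threshold N m - threshold N (Suc m)))
      {threshold N (Suc m)..threshold N m}"
    using threshold_antimono[of m "Suc m" N] step(2)
    by (intro has_integral_constant_on_open_interval) (use level_eqI[of "Suc m" N] in auto)
  then have "((\<lambda>t. F (level N t)) has_integral
      (\<Sum>j\<in>{Suc m<..N}. F j * mu_seq j / 2) + F (Suc m) * mu_seq (Suc m) / 2) {0..threshold N m}"
    using has_integral_combine[OF _ _ step.IH] threshold_nonneg threshold_antimono[of m "Suc m" N]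
      threshold_Suc[OF step(2)]
    by simp
  moreover have "{m<..N} = insert (Suc m) {Suc m<..N}" using step(2) by auto
  ultimately show ?case by (simp add: add.commute)
qed

lemma has_integral_level:
  fixes F :: "nat \<Rightarrow> real"
  assumes "threshold N 0 \<le> R"
  shows "((\<lambda>t. F (level N t)) has_integral
      (\<Sum>j\<in>{1..N}. F j * mu_seq j / 2) + F 0 * (R - threshold N 0)) {0..R}"
proof -
  have "((\<lambda>t. F (level N t)) has_integral F 0 * (R - threshold N 0)) {threshold N 0..R}"
    using assms by (intro has_integral_constant_on_open_interval) (simp_all add: level_eq_0)
  moreover have "{0<..N} = {1..N}" by auto
  ultimately show ?thesis
    using has_integral_combine[OF threshold_nonneg assms has_integral_level_below[of 0 N F]] by simp
qed

lemma integrable_level: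
  fixes F :: "nat \<Rightarrow> real"
  assumes "0 \<le> a"
  shows "(\<lambda>t. F (level N t)) integrable_on {a..b}"
proof -
  define R where "R = max b (threshold N 0)"
  have "(\<lambda>t. F (level N t)) integrable_on {0..R}"
    using has_integral_level[of N R F] unfolding R_def by auto
  then show ?thesis
    by (rule integrable_subinterval_real) (use assms in \<open>auto simp: R_def\<close>)
qed

(* Since p < 2, the terms p^j mu_j / 2 = (p/2)^j / (4 j) decay geometrically, so the sum is
   dominated by its first term, which is comparable to threshold N K p^K. *)
lemma sum_pow_mu_seq_le:
  fixes p :: real
  assumes "0 < p" "p < 2"
  shows "(\<Sum>j\<in>{K<..N}. p ^ j * mu_seq j / 2) \<le> 4 / (2 - p) * threshold N K * p ^ K"
proof (cases "K < N")
  case True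
  define q where "q = p / 2"
  have q: "0 < q" "q < 1" using assms unfolding q_def by auto
  have "(\<Sum>j\<in>{K<..N}. p ^ j * mu_seq j / 2) = (\<Sum>j\<in>{K<..N}. q ^ j / (4 * real j))"
    by (rule sum.cong) (simp_all add: q_def mu_seq_def power_divide)
  also have "\<dots> \<le> (\<Sum>j\<in>{K<..N}. q ^ j / (4 * (real K + 1)))"
    using q by (intro sum_mono divide_left_mono) auto
  also have "\<dots> = (\<Sum>j\<in>{K<..N}. q ^ j) / (4 * (real K + 1))"
    by (simp add: sum_divide_distrib)
  also have "\<dots> \<le> q ^ Suc K / (1 - q) / (4 * (real K + 1))"
    using q by (intro divide_right_mono sum_power_greaterThanAtMost_le) auto
  also have "\<dots> \<le> q ^ K / (1 - q) / (4 * (real K + 1))"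
    using q by (intro divide_right_mono power_decreasing) auto
  also have "\<dots> = 4 / (2 - p) * (mu_seq (Suc K) / 2) * p ^ K"
    using assms by (simp add: q_def mu_seq_def power_divide divide_simps)
  also have "\<dots> \<le> 4 / (2 - p) * threshold N K * p ^ K"
    using assms threshold_ge_mu_seq[OF True] by (intro mult_right_mono mult_left_mono) auto
  finally show ?thesis .
qed (use assms threshold_nonneg in simp)

lemma integral_pow_level_le:
  fixes p :: real
  assumes "1 < p" "p < 2" "0 \<le> \<rho>"
  shows "integral {0..\<rho>} (\<lambda>t. p ^ level N t) \<le> (1 + 4 / (2 - p)) * \<rho> * p ^ level N \<rho>"
proof -
  define K where "K = level N \<rho>"
  have K: "0 \<le> threshold N K" "threshold N K \<le> \<rho>"
    using threshold_nonneg threshold_level_le[OF assms(3)] unfolding K_def by auto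
  have "integral {0..threshold N K} (\<lambda>t. p ^ level N t) = (\<Sum>j\<in>{K<..N}. p ^ j * mu_seq j / 2)"
    using has_integral_level_below[of K N] level_le[of N \<rho>] unfolding K_def
    by (simp add: integral_unique)
  also have "\<dots> \<le> 4 / (2 - p) * threshold N K * p ^ K"
    using assms(1,2) by (intro sum_pow_mu_seq_le) auto
  also have "\<dots> \<le> 4 / (2 - p) * \<rho> * p ^ K"
    using K(2) assms(1,2) by (intro mult_right_mono mult_left_mono) auto
  finally have low: "integral {0..threshold N K} (\<lambda>t. p ^ level N t) \<le> 4 / (2 - p) * \<rho> * p ^ K" .
  have "integral {threshold N K..\<rho>} (\<lambda>t. p ^ level N t) \<le> integral {threshold N K..\<rho>} (\<lambda>t. p ^ K)"
    using assms(1) K level_le_if_threshold_le[of N K]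
    by (intro integral_le integrable_level) (auto intro: power_increasing)
  also have "\<dots> \<le> \<rho> * p ^ K"
    using K assms(1) by (simp add: mult_right_mono)
  finally have high: "integral {threshold N K..\<rho>} (\<lambda>t. p ^ level N t) \<le> \<rho> * p ^ K" .
  have "integral {0..\<rho>} (\<lambda>t. p ^ level N t) =
      integral {0..threshold N K} (\<lambda>t. p ^ level N t)
      + integral {threshold N K..\<rho>} (\<lambda>t. p ^ level N t)"
    using K
    by (intro Henstock_Kurzweil_Integration.integral_combine[symmetric] integrable_level) auto
  then show ?thesis
    using low high unfolding K_def by (simp add: algebra_simps)
qed

section \<open>Distance to the half-integers\<close>

(* The distance |y - floor y - 1/2| from y to Z + 1/2, written via infdist so that continuity is
   immediate. *)
definition halfint_dist :: "real \<Rightarrow> real" where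
  "halfint_dist y = 1/2 - infdist y \<int>"

lemma infdist_Ints_cell:
  assumes "of_int n \<le> y" "y \<le> of_int n + 1"
  shows "infdist y \<int> = min (y - of_int n) (of_int n + 1 - y)"
proof (rule antisym)
  have "infdist y \<int> \<le> dist y (of_int n)" "infdist y \<int> \<le> dist y (of_int (n + 1))"
    by (intro infdist_le Ints_of_int)+
  then show "infdist y \<int> \<le> min (y - of_int n) (of_int n + 1 - y)"
    using assms by (auto simp: dist_real_def)
next
  have "min (y - of_int n) (of_int n + 1 - y) \<le> dist y z" if "z \<in> \<int>" for z
  proof -
    obtain m where "z = of_int m" using \<open>z \<in> \<int>\<close> by (auto elim: Ints_cases)
    moreover have "m \<le> n \<or> n + 1 \<le> m" by linarith
    then have "real_of_int m \<le> of_int n \<or> of_int n + 1 \<le> real_of_int m"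
      by (metis of_int_1 of_int_add of_int_le_iff)
    ultimately show ?thesis using assms by (auto simp: dist_real_def)
  qed
  then show "min (y - of_int n) (of_int n + 1 - y) \<le> infdist y \<int>"
    unfolding infdist_def using Ints_0 by (auto intro!: cINF_greatest)
qed

lemma halfint_dist_cell:
  assumes "of_int n \<le> y" "y \<le> of_int n + 1"
  shows "halfint_dist y = \<bar>y - of_int n - 1/2\<bar>"
  unfolding halfint_dist_def infdist_Ints_cell[OF assms] by (auto simp: min_def abs_if)

lemma halfint_dist_ge: "1/2 - \<bar>y - of_int n\<bar> \<le> halfint_dist y"
  using infdist_le[of "of_int n" \<int> y] unfolding halfint_dist_def by (simp add: dist_real_def)

lemma halfint_dist_nonneg: "0 \<le> halfint_dist y"
  using halfint_dist_cell[of "\<lfloor>y\<rfloor>" y] by linarith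

lemma continuous_on_halfint_dist [continuous_intros]:
  "continuous_on A f \<Longrightarrow> continuous_on A (\<lambda>x. halfint_dist (f x))"
  unfolding halfint_dist_def by (intro continuous_intros)

lemma has_integral_halfint_dist:
  fixes f :: "real \<Rightarrow> real"
  assumes "(f has_integral J) {0..1/2}"
  shows "((\<lambda>y. f (halfint_dist y)) has_integral 2 * real n * J) {of_int m..of_int m + real n}"
proof (induction n)
  case 0
  then show ?case by (simp add: has_integral_refl)
next
  case (Suc n)
  define k where "k = m + int n"
  have "((\<lambda>y. f \<bar>y - (of_int k + 1/2)\<bar>) has_integral 2 * J) {of_int k..of_int k + 1}"
    using has_integral_abs_diff[OF assms, of "of_int k + 1/2"] by (simp add: add.commute)
  then have "((\<lambda>y. f (halfint_dist y)) has_integral 2 * J) {of_int k..of_int k + 1}"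
    by (rule has_integral_eq[rotated]) (simp add: halfint_dist_cell[of k] diff_diff_eq)
  moreover have "{of_int k..of_int k + 1} = {of_int m + real n..of_int m + real (Suc n)}"
    by (simp add: k_def)
  ultimately have "((\<lambda>y. f (halfint_dist y)) has_integral 2 * J)
      {of_int m + real n..of_int m + real (Suc n)}"
    by simp
  from has_integral_combine[OF _ _ Suc this] show ?case
    by (simp add: algebra_simps)
qed

lemma has_integral_halfint_dist_scaled:
  fixes f :: "real \<Rightarrow> real"
  assumes "(f has_integral J) {0..1/2}" "0 < M"
  shows "((\<lambda>x. f (halfint_dist (M * x))) has_integral 2 * real n * J / M) {0..real n / M}"
  using has_integral_stretch_real[OF has_integral_halfint_dist[OF assms(1), of n 0], of M] assms(2)
  by simp

lemma measure_halfint_dist_preimage: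
  assumes "1 \<le> M" "open S" "S \<subseteq> {0..1}"
    and "\<And>x. x \<in> {0<..<1} \<Longrightarrow> x \<in> S \<longleftrightarrow> halfint_dist (real M * x) \<in> I"
    and "(indicator I has_integral J) {0..1/2}"
  shows "measure lebesgue S = 2 * J"
proof -
  have "((\<lambda>x. indicator I (halfint_dist (real M * x)) :: real) has_integral 2 * J) {0..1}"
    using has_integral_halfint_dist_scaled[OF assms(5), of "real M" M] assms(1) by simp
  then have "(indicator S has_integral 2 * J) {0..1}"
    by (rule has_integral_spike_finite[of "{0, 1}", rotated 2])
      (use assms(4) in \<open>auto simp: indicator_def\<close>)
  moreover have S: "S \<inter> {0..1} = S" using assms(3) by auto
  then have "bounded S" using bounded_subset[OF bounded_closed_interval, of S 0 1] by auto
  then have "S \<inter> {0..1} \<in> lmeasurable" unfolding S using assms(2) by (rule lmeasurable_open)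
  ultimately show ?thesis
    using integral_indicator[of S "{0..1}"] unfolding S by (simp add: integral_unique)
qed

section \<open>The \<open>A\<^sub>r\<close> quotient\<close>

definition Ar_quotient :: "real \<Rightarrow> (real \<Rightarrow> real) \<Rightarrow> real \<Rightarrow> real \<Rightarrow> real" where
  "Ar_quotient r W a b = (integral {a..b} W / (b - a)) *
     (integral {a..b} (\<lambda>x. W x powr (- 1 / (r - 1))) / (b - a)) powr (r - 1)"

lemma Ar_quotient_le:
  assumes "a < b" "1 \<le> r"
    and "W integrable_on {a..b}" "(\<lambda>x. W x powr (- 1 / (r - 1))) integrable_on {a..b}"
    and "\<And>x. x \<in> {a..b} \<Longrightarrow> 0 \<le> W x \<and> W x \<le> A"
    and "integral {a..b} (\<lambda>x. W x powr (- 1 / (r - 1))) \<le> (b - a) * B"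
  shows "Ar_quotient r W a b \<le> A * B powr (r - 1)"
proof -
  have W: "0 \<le> integral {a..b} W / (b - a)" "integral {a..b} W / (b - a) \<le> A"
    using assms(1,5) integral_nonneg[OF assms(3)]
      integral_le[OF assms(3) integrable_const_ivl, of A]
    by (auto simp: divide_le_eq mult.commute)
  have "0 \<le> integral {a..b} (\<lambda>x. W x powr (- 1 / (r - 1))) / (b - a)"
    using assms(1) by (intro divide_nonneg_nonneg integral_nonneg[OF assms(4)]) auto
  moreover have "integral {a..b} (\<lambda>x. W x powr (- 1 / (r - 1))) / (b - a) \<le> B"
    using assms(1,6) by (simp add: divide_le_eq mult.commute)
  ultimately have "(integral {a..b} (\<lambda>x. W x powr (- 1 / (r - 1))) / (b - a)) powr (r - 1)
      \<le> B powr (r - 1)"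
    using assms(2) by (intro powr_mono2) auto
  then show ?thesis
    unfolding Ar_quotient_def using W by (intro mult_mono) auto
qed

lemma Ar_quotient_cong:
  assumes "\<And>x. x \<in> {a..b} \<Longrightarrow> W x = W' x"
  shows "Ar_quotient r W a b = Ar_quotient r W' a b"
proof -
  have "integral {a..b} W = integral {a..b} W'"
    "integral {a..b} (\<lambda>x. W x powr (- 1 / (r - 1)))
      = integral {a..b} (\<lambda>x. W' x powr (- 1 / (r - 1)))"
    using assms by (auto intro: integral_cong)
  then show ?thesis unfolding Ar_quotient_def by simp
qed

lemma Ar_quotient_dilation:
  assumes "0 < M"
  shows "Ar_quotient r (\<lambda>x. W (M * x)) a b = Ar_quotient r W (M * a) (M * b)"
proof -
  have integral: "integral {a..b} (\<lambda>x. f (M * x)) = integral {M * a..M * b} f / M"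
    for f :: "real \<Rightarrow> real"
    using integral_stretch_real[of M "M * a" "M * b" f] assms by simp
  have "M * b - M * a = M * (b - a)" by (simp add: algebra_simps)
  then show ?thesis
    unfolding Ar_quotient_def integral[of W] integral[of "\<lambda>y. W y powr (- 1 / (r - 1))"]
    using assms by simp
qed

lemma half_power_powr: "((1/2) ^ k) powr (- 1 / (r - 1)) = (2 powr (1 / (r - 1)) :: real) ^ k"
proof -
  have "((1/2::real) ^ k) = 2 powr (- real k)"
    by (simp add: powr_minus powr_realpow power_one_over inverse_eq_divide)
  then have "((1/2::real) ^ k) powr (- 1 / (r - 1)) = 2 powr (real k * (1 / (r - 1)))"
    by (simp add: powr_powr)
  also have "\<dots> = (2 powr (1 / (r - 1))) ^ k"
    by (simp add: powr_power)
  finally show ?thesis .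
qed

lemma two_powr_inverse_power_powr:
  assumes "1 < r"
  shows "((2 powr (1 / (r - 1))) ^ k) powr (r - 1) = (2 :: real) ^ k"
proof -
  have "((2 powr (1 / (r - 1))) ^ k) powr (r - 1)
      = (2::real) powr (real k * (1 / (r - 1)) * (r - 1))"
    by (simp add: powr_power powr_powr)
  also have "\<dots> = 2 ^ k"
    using assms by (simp add: powr_realpow)
  finally show ?thesis .
qed

lemma two_powr_inverse_bounds:
  assumes "2 < r"
  shows "1 < 2 powr (1 / (r - 1))" "2 powr (1 / (r - 1)) < (2::real)"
  using assms powr_less_mono[of "1 / (r - 1)" 1 2] by (auto simp: divide_simps)

(* 2 bounds intervals far from a cell centre; with p = 2^(1/(r-1)), the term 17 (1 + 4 / (2 - p))
   bounds intervals of length >= 1/8, which meet at most 17 (b - a) cells, and dominates the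
   4 (1 + 4 / (2 - p)) needed for intervals near a cell centre. *)
definition Ar_bound :: "real \<Rightarrow> real" where
  "Ar_bound r = max 2 ((17 * (1 + 4 / (2 - 2 powr (1 / (r - 1))))) powr (r - 1))"

lemma integrable_level_abs_diff:
  fixes F :: "nat \<Rightarrow> real"
  shows "(\<lambda>y. F (level N \<bar>y - c\<bar>)) integrable_on {a..b}"
proof -
  define R where "R = max \<bar>a - c\<bar> \<bar>b - c\<bar>"
  have "((\<lambda>t. F (level N t)) has_integral integral {0..R} (\<lambda>t. F (level N t))) {0..R}"
    by (intro integrable_integral integrable_level) simp
  from has_integral_abs_diff[OF this, of c]
  have "(\<lambda>y. F (level N \<bar>y - c\<bar>)) integrable_on {c - R..c + R}"
    unfolding R_def by (metis abs_ge_zero has_integral_integrable max.coboundedI1)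
  then show ?thesis
    by (rule integrable_subinterval_real) (auto simp: R_def)
qed

lemma Ar_quotient_centered_far:
  assumes "a < b" "2 < r" "\<And>y. y \<in> {a..b} \<Longrightarrow> d \<le> \<bar>y - c\<bar> \<and> \<bar>y - c\<bar> \<le> 2 * d"
  shows "Ar_quotient r (\<lambda>y. (1/2) ^ level N \<bar>y - c\<bar>) a b \<le> 2"
proof -
  define p where "p = 2 powr (1 / (r - 1))"
  have p: "1 < p" using two_powr_inverse_bounds[OF assms(2)] by (simp add: p_def)
  define k where "k = level N d"
  have W: "(1/2::real) ^ level N \<bar>y - c\<bar> \<le> 2 * (1/2) ^ k" if "y \<in> {a..b}" for y
  proof -
    have "k \<le> Suc (level N (2 * d))" unfolding k_def by (rule level_le_level_double)
    also have "\<dots> \<le> Suc (level N \<bar>y - c\<bar>)" using assms(3)[OF that] by (simp add: level_antimono)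
    finally have "(1/2::real) ^ Suc (level N \<bar>y - c\<bar>) \<le> (1/2) ^ k" by (intro power_decreasing) auto
    then show ?thesis by simp
  qed
  have "integral {a..b} (\<lambda>y. ((1/2) ^ level N \<bar>y - c\<bar>) powr (- 1 / (r - 1)))
      \<le> integral {a..b} (\<lambda>y. p ^ k)"
    unfolding half_power_powr p_def[symmetric] using p assms(3)
    by (intro integral_le integrable_level_abs_diff)
      (auto intro!: power_increasing level_antimono simp: k_def)
  then have "Ar_quotient r (\<lambda>y. (1/2) ^ level N \<bar>y - c\<bar>) a b
      \<le> (2 * (1/2) ^ k) * (p ^ k) powr (r - 1)"
    using assms(1,2) W
    by (intro Ar_quotient_le)
      (auto simp: half_power_powr p_def[symmetric] intro: integrable_level_abs_diff)
  also have "\<dots> = 2"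
    using two_powr_inverse_power_powr[of r k] assms(2) by (simp add: p_def power_one_over)
  finally show ?thesis .
qed

lemma Ar_quotient_centered_near:
  assumes "a < b" "2 < r" "\<And>y. y \<in> {a..b} \<Longrightarrow> \<bar>y - c\<bar> \<le> 2 * (b - a)"
  shows "Ar_quotient r (\<lambda>y. (1/2) ^ level N \<bar>y - c\<bar>) a b
    \<le> (4 * (1 + 4 / (2 - 2 powr (1 / (r - 1))))) powr (r - 1)"
proof -
  define p where "p = 2 powr (1 / (r - 1))"
  define L where "L = 1 + 4 / (2 - p)"
  have p: "1 < p" "p < 2" using two_powr_inverse_bounds[OF assms(2)] by (auto simp: p_def)
  define D where "D = 2 * (b - a)"
  define k where "k = level N D"
  have D: "0 \<le> D" "{a..b} \<subseteq> {c - D..c + D}"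
    using assms(1) assms(3)[of a] assms(3)[of b] unfolding D_def by (auto simp: abs_le_iff)
  have "integral {a..b} (\<lambda>y. p ^ level N \<bar>y - c\<bar>)
      \<le> integral {c - D..c + D} (\<lambda>y. p ^ level N \<bar>y - c\<bar>)"
    using p D by (intro integral_subset_le integrable_level_abs_diff) auto
  also have "\<dots> = 2 * integral {0..D} (\<lambda>t. p ^ level N t)"
    using has_integral_abs_diff[OF integrable_integral[OF integrable_level] D(1)]
    by (simp add: integral_unique)
  also have "\<dots> \<le> 2 * (L * D * p ^ k)"
    using integral_pow_level_le[OF p D(1)] unfolding L_def k_def by simp
  finally have "integral {a..b} (\<lambda>y. ((1/2) ^ level N \<bar>y - c\<bar>) powr (- 1 / (r - 1)))
      \<le> (b - a) * (4 * L * p ^ k)"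
    unfolding half_power_powr p_def[symmetric] D_def by (simp add: algebra_simps)
  moreover have "(1/2::real) ^ level N \<bar>y - c\<bar> \<le> (1/2) ^ k" if "y \<in> {a..b}" for y
    using assms(3)[OF that] unfolding k_def D_def by (intro power_decreasing level_antimono) auto
  ultimately have "Ar_quotient r (\<lambda>y. (1/2) ^ level N \<bar>y - c\<bar>) a b
      \<le> (1/2) ^ k * (4 * L * p ^ k) powr (r - 1)"
    using assms(1,2)
    by (intro Ar_quotient_le)
      (auto simp: half_power_powr p_def[symmetric] intro: integrable_level_abs_diff)
  also have "\<dots> = (4 * L) powr (r - 1)"
    using p two_powr_inverse_power_powr[of r k] assms(2)
    by (simp add: powr_mult L_def p_def power_one_over)
  finally show ?thesis unfolding L_def p_def .
qed

lemma Ar_quotient_centered_profile: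
  assumes "a < b" "2 < r"
  shows "Ar_quotient r (\<lambda>y. (1/2) ^ level N \<bar>y - c\<bar>) a b \<le> Ar_bound r"
proof -
  define L where "L = 1 + 4 / (2 - 2 powr (1 / (r - 1)))"
  have "1 \<le> L" using two_powr_inverse_bounds[OF assms(2)] unfolding L_def by simp
  then have near_bound: "(4 * L) powr (r - 1) \<le> Ar_bound r"
    using assms(2) unfolding Ar_bound_def L_def[symmetric]
    by (intro max.coboundedI2 powr_mono2) auto
  have far_bound: "2 \<le> Ar_bound r" unfolding Ar_bound_def by simp
  consider (left) "c \<le> a" "b - a \<le> a - c" | (right) "b \<le> c" "b - a \<le> c - b"
    | (near) "\<And>y. y \<in> {a..b} \<Longrightarrow> \<bar>y - c\<bar> \<le> 2 * (b - a)"
    by (cases "c \<le> a"; cases "b \<le> c") (auto simp: abs_le_iff, linarith+)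
  then show ?thesis
  proof cases
    case left
    then show ?thesis
      using Ar_quotient_centered_far[OF assms, of "a - c" c N] far_bound by auto
  next
    case right
    then show ?thesis
      using Ar_quotient_centered_far[OF assms, of "c - b" c N] far_bound by auto
  next
    case near
    then show ?thesis
      using Ar_quotient_centered_near[OF assms near, of N] near_bound unfolding L_def by linarith
  qed
qed

definition stretched_weight :: "nat \<Rightarrow> nat \<Rightarrow> real \<Rightarrow> real" where
  "stretched_weight N M y = (if y \<in> {0..real M} then (1/2) ^ level N (halfint_dist y) else 1)"

lemma integrable_level_halfint_dist_ext:
  fixes F :: "nat \<Rightarrow> real"
  shows "(\<lambda>y. if y \<in> {0..real M} then F (level N (halfint_dist y)) else 1) integrable_on {a..b}"
proof (rule integrable_on_if_Icc)
  have "((\<lambda>t. F (level N t)) has_integral integral {0..1/2} (\<lambda>t. F (level N t))) {0..1/2}"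
    by (intro integrable_integral integrable_level) simp
  from has_integral_halfint_dist[OF this, of M 0]
  show "(\<lambda>y. F (level N (halfint_dist y))) integrable_on {0..real M}"
    by (auto simp: integrable_on_def)
qed

lemma stretched_weight_powr:
  "stretched_weight N M y powr (- 1 / (r - 1))
    = (if y \<in> {0..real M} then (2 powr (1 / (r - 1))) ^ level N (halfint_dist y) else 1)"
  unfolding stretched_weight_def half_power_powr[symmetric] by simp

lemma stretched_weight_eq_1:
  assumes "y \<notin> {0<..<real M} \<or> 1/4 \<le> halfint_dist y"
  shows "stretched_weight N M y = 1"
proof -
  have "y \<in> {0..real M} \<Longrightarrow> y \<notin> {0<..<real M} \<Longrightarrow> 1/4 \<le> halfint_dist y"
    using halfint_dist_ge[of y 0] halfint_dist_ge[of y "int M"] by auto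
  then have "y \<in> {0..real M} \<Longrightarrow> level N (halfint_dist y) = 0"
    using assms threshold_zero_le[of N] by (intro level_eq_0) auto
  then show ?thesis unfolding stretched_weight_def by auto
qed

(* On a short interval inside a cell of [0, M] the weight is the profile centred at the cell
   midpoint; otherwise the interval meets an integer or lies outside (0, M), the weight is
   identically 1 there, and any centre at distance >= 1/4 will do. *)
lemma stretched_weight_locally_centered:
  assumes "b - a < 1/8"
  obtains c where "\<And>y. y \<in> {a..b} \<Longrightarrow> stretched_weight N M y = (1/2) ^ level N \<bar>y - c\<bar>"
proof -
  define n where "n = \<lfloor>a\<rfloor>"
  have n: "of_int n \<le> a" "a < of_int n + 1" unfolding n_def by linarith+
  consider (inside) "b \<le> of_int n + 1" "0 \<le> n" "n + 1 \<le> int M"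
    | (outside) "b \<le> of_int n + 1" "n + 1 \<le> 0 \<or> int M \<le> n"
    | (across) "of_int n + 1 < b"
    by linarith
  then show ?thesis
  proof cases
    case inside
    have "real_of_int (n + 1) \<le> real_of_int (int M)" "real_of_int 0 \<le> real_of_int n"
      using inside by (simp_all only: of_int_le_iff)
    then have cell: "y \<in> {of_int n..of_int n + 1} \<and> y \<in> {0..real M}" if "y \<in> {a..b}" for y
      using that n inside by auto
    have "stretched_weight N M y = (1/2) ^ level N \<bar>y - (of_int n + 1/2)\<bar>" if "y \<in> {a..b}" for y
      using halfint_dist_cell[of n y] cell[OF that] unfolding stretched_weight_def
      by (simp add: diff_diff_eq)
    then show ?thesis by (rule that)
  next
    case outside
    have "real_of_int (n + 1) \<le> real_of_int 0 \<or> real_of_int (int M) \<le> real_of_int n"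
      using outside by (simp only: of_int_le_iff)
    then have "stretched_weight N M y = 1" if "y \<in> {a..b}" for y
      using that n outside by (intro stretched_weight_eq_1) auto
    moreover have "level N \<bar>y - (a - 1)\<bar> = 0" if "y \<in> {a..b}" for y
      using that threshold_zero_le[of N] by (intro level_eq_0) auto
    ultimately show ?thesis using that[of "a - 1"] by simp
  next
    case across
    have "stretched_weight N M y = 1" if "y \<in> {a..b}" for y
    proof (rule stretched_weight_eq_1)
      have "a \<le> y" "y \<le> b" using that by auto
      then have "\<bar>y - (of_int n + 1)\<bar> \<le> 1/8" using n across assms by (intro abs_leI) linarith+
      then show "y \<notin> {0<..<real M} \<or> 1/4 \<le> halfint_dist y"
        using halfint_dist_ge[of y "n + 1"] by simp
    qed
    moreover have "level N \<bar>y - (a - 1)\<bar> = 0" if "y \<in> {a..b}" for y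
      using that threshold_zero_le[of N] by (intro level_eq_0) auto
    ultimately show ?thesis using that[of "a - 1"] by simp
  qed
qed

lemma integral_stretched_weight_powr_long:
  assumes "1/8 \<le> b - a" "2 < r"
  shows "integral {a..b} (\<lambda>y. stretched_weight N M y powr (- 1 / (r - 1)))
    \<le> (b - a) * (17 * (1 + 4 / (2 - 2 powr (1 / (r - 1)))))"
proof -
  define p where "p = 2 powr (1 / (r - 1))"
  define L where "L = 1 + 4 / (2 - p)"
  have p: "1 < p" "p < 2" using two_powr_inverse_bounds[OF assms(2)] by (auto simp: p_def)
  have "0 \<le> L" using p unfolding L_def by simp
  define m where "m = \<lfloor>a\<rfloor>"
  define n where "n = nat (\<lceil>b\<rceil> - \<lfloor>a\<rfloor>)"
  have "\<lfloor>a\<rfloor> \<le> \<lceil>b\<rceil>" using assms(1) by linarith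
  then have n: "real n = of_int \<lceil>b\<rceil> - of_int \<lfloor>a\<rfloor>" unfolding n_def by simp
  have mn: "{a..b} \<subseteq> {of_int m..of_int m + real n}" "real n \<le> 17 * (b - a)"
    using assms(1) unfolding n m_def by (auto, linarith+)
  have periodic: "((\<lambda>y. p ^ level N (halfint_dist y)) has_integral
      2 * real n * integral {0..1/2} (\<lambda>t. p ^ level N t)) {of_int m..of_int m + real n}"
    by (intro has_integral_halfint_dist integrable_integral integrable_level) simp
  have "integral {a..b} (\<lambda>y. stretched_weight N M y powr (- 1 / (r - 1)))
      \<le> integral {a..b} (\<lambda>y. p ^ level N (halfint_dist y))"
    unfolding stretched_weight_powr p_def[symmetric]
    using p integrable_subinterval_real[OF has_integral_integrable[OF periodic] mn(1)]
    by (intro integral_le integrable_level_halfint_dist_ext) (auto simp: one_le_power)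
  also have "\<dots> \<le> integral {of_int m..of_int m + real n} (\<lambda>y. p ^ level N (halfint_dist y))"
    using p mn(1) integrable_subinterval_real[OF has_integral_integrable[OF periodic] mn(1)]
    by (intro integral_subset_le has_integral_integrable[OF periodic]) auto
  also have "\<dots> \<le> 2 * real n * (L * (1/2) * p ^ level N (1/2))"
    using integral_pow_level_le[OF p, of "1/2" N] unfolding integral_unique[OF periodic] L_def
    by (intro mult_left_mono) auto
  also have "\<dots> = real n * L"
    using threshold_zero_le[of N] by (simp add: level_eq_0)
  also have "\<dots> \<le> (b - a) * (17 * L)"
    using mult_right_mono[OF mn(2) \<open>0 \<le> L\<close>] by (simp add: algebra_simps)
  finally show ?thesis unfolding L_def p_def .
qed

lemma Ar_quotient_stretched_weight:
  assumes "a < b" "2 < r"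
  shows "Ar_quotient r (stretched_weight N M) a b \<le> Ar_bound r"
proof (cases "1/8 \<le> b - a")
  case True
  have "stretched_weight N M integrable_on {a..b}"
    unfolding stretched_weight_def[abs_def] by (rule integrable_level_halfint_dist_ext)
  moreover have "(\<lambda>y. stretched_weight N M y powr (- 1 / (r - 1))) integrable_on {a..b}"
    unfolding stretched_weight_powr by (rule integrable_level_halfint_dist_ext)
  moreover have "0 \<le> stretched_weight N M y \<and> stretched_weight N M y \<le> 1" for y
    unfolding stretched_weight_def by (simp add: power_le_one)
  ultimately have "Ar_quotient r (stretched_weight N M) a b
      \<le> 1 * (17 * (1 + 4 / (2 - 2 powr (1 / (r - 1))))) powr (r - 1)"
    using assms(2)
    by (intro Ar_quotient_le[OF assms(1)] integral_stretched_weight_powr_long[OF True assms(2)]) auto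
  then show ?thesis unfolding Ar_bound_def by simp
next
  case False
  then obtain c where "\<And>y. y \<in> {a..b} \<Longrightarrow> stretched_weight N M y = (1/2) ^ level N \<bar>y - c\<bar>"
    using stretched_weight_locally_centered[of b a N M] by auto
  then have "Ar_quotient r (stretched_weight N M) a b
      = Ar_quotient r (\<lambda>y. (1/2) ^ level N \<bar>y - c\<bar>) a b"
    by (rule Ar_quotient_cong)
  also have "\<dots> \<le> Ar_bound r"
    by (rule Ar_quotient_centered_profile[OF assms])
  finally show ?thesis .
qed

section \<open>The construction\<close>

definition slope :: "nat \<Rightarrow> nat \<Rightarrow> real" where
  "slope N j = (if j = 0 then b_seq N else - (2 ^ j))"

lemma has_integral_slope_level: "((\<lambda>t. slope N (level N t)) has_integral 0) {0..1/2}"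
proof -
  define H where "H = (\<Sum>k=1..N. 1 / real k)"
  define S where "S = (\<Sum>k=1..N. 1 / (real k * 2 ^ k))"
  have "(\<Sum>k=1..N. mu_seq k) = S / 2"
    unfolding S_def sum_divide_distrib by (rule sum.cong) (simp_all add: mu_seq_def)
  moreover have "{0<..N} = {1..N}" by auto
  ultimately have threshold_0: "threshold N 0 = S / 4"
    unfolding threshold_def by simp
  then have "S \<le> 1" using threshold_zero_le[of N] by simp
  have "(\<Sum>j=1..N. slope N j * mu_seq j / 2) = (\<Sum>j=1..N. - (1 / real j) / 4)"
    by (rule sum.cong) (auto simp: slope_def mu_seq_def)
  also have "\<dots> = - H / 4" unfolding H_def by (simp add: sum_negf sum_divide_distrib)
  finally have "(\<Sum>j=1..N. slope N j * mu_seq j / 2) = - H / 4" .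
  moreover have "slope N 0 = H / (2 - S)"
    unfolding slope_def b_seq_def H_def S_def by simp
  moreover have "1/2 - threshold N 0 = (2 - S) / 4" using threshold_0 by simp
  ultimately have "(\<Sum>j=1..N. slope N j * mu_seq j / 2) + slope N 0 * (1/2 - threshold N 0)
      = - H / 4 + H / (2 - S) * ((2 - S) / 4)"
    by (simp only:)
  also have "\<dots> = 0" using \<open>S \<le> 1\<close> by simp
  finally show ?thesis
    using has_integral_level[of N "1/2" "slope N"] threshold_zero_le[of N] by simp
qed

definition level_at :: "nat \<Rightarrow> nat \<Rightarrow> real \<Rightarrow> nat" where
  "level_at N M x = level N (halfint_dist (real M * x))"

definition u_constr :: "nat \<Rightarrow> nat \<Rightarrow> real \<Rightarrow> real" where
  "u_constr N M x = integral {0..x} (\<lambda>t. slope N (level_at N M t))"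

definition w_constr :: "nat \<Rightarrow> nat \<Rightarrow> real \<Rightarrow> real" where
  "w_constr N M x = (1/2) ^ level_at N M x"

definition good_set :: "nat \<Rightarrow> nat \<Rightarrow> nat \<Rightarrow> real set" where
  "good_set N M k = {x \<in> {0<..<1}.
     threshold N k < halfint_dist (real M * x) \<and> halfint_dist (real M * x) < threshold N (k - 1)}"

definition bad_set :: "nat \<Rightarrow> nat \<Rightarrow> real set" where
  "bad_set N M = {x \<in> {0<..<1}. threshold N 0 < halfint_dist (real M * x)}"

definition breakpoints :: "nat \<Rightarrow> nat \<Rightarrow> real set" where
  "breakpoints N M = {0, 1} \<union> {x \<in> {0..1}. \<exists>j\<le>N. halfint_dist (real M * x) = threshold N j}"

lemma has_integral_slope_level_at:
  assumes "1 \<le> M"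
  shows "((\<lambda>t. slope N (level_at N M t)) has_integral 0) {0..real n / real M}"
  using has_integral_halfint_dist_scaled[OF has_integral_slope_level[of N], where M="real M" and n=n]
    assms
  unfolding level_at_def by simp

lemma integrable_slope_level_at:
  assumes "1 \<le> M" "0 \<le> a" "b \<le> 1"
  shows "(\<lambda>t. slope N (level_at N M t)) integrable_on {a..b}"
proof (rule integrable_subinterval_real)
  show "(\<lambda>t. slope N (level_at N M t)) integrable_on {0..1}"
    using has_integral_slope_level_at[OF assms(1), of N M] assms by (auto simp: integrable_on_def)
qed (use assms in auto)

lemma u_constr_affine:
  assumes "1 \<le> M" "0 \<le> x" "x \<le> t" "t \<le> 1"
    and "\<And>s. x < s \<Longrightarrow> s < t \<Longrightarrow> slope N (level_at N M s) = m"
  shows "u_constr N M t = u_constr N M x + m * (t - x)"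
proof -
  have "integral {0..x} (\<lambda>s. slope N (level_at N M s))
      + integral {x..t} (\<lambda>s. slope N (level_at N M s)) = u_constr N M t"
    unfolding u_constr_def using assms(1-4)
    by (intro Henstock_Kurzweil_Integration.integral_combine integrable_slope_level_at) auto
  moreover have "((\<lambda>s. slope N (level_at N M s)) has_integral m * (t - x)) {x..t}"
    using assms(3,5) by (rule has_integral_constant_on_open_interval)
  ultimately show ?thesis unfolding u_constr_def by (simp add: integral_unique)
qed

lemma u_constr_grid: "1 \<le> M \<Longrightarrow> u_constr N M (real n / real M) = 0"
  unfolding u_constr_def using has_integral_slope_level_at by (rule integral_unique)

lemma u_constr_0: "u_constr N M 0 = 0"
  by (simp add: u_constr_def)

lemma u_constr_1: "1 \<le> M \<Longrightarrow> u_constr N M 1 = 0"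
  using u_constr_grid[of M N M] by simp

lemma abs_slope_le:
  assumes "j \<le> N"
  shows "\<bar>slope N j\<bar> \<le> \<bar>b_seq N\<bar> + 2 ^ N"
proof -
  have "(2::real) ^ j \<le> 2 ^ N" using assms by (intro power_increasing) auto
  then show ?thesis by (auto simp: slope_def intro: add_increasing)
qed

lemma abs_u_constr_le:
  assumes "1 \<le> M" "x \<in> {0..1}"
  shows "\<bar>u_constr N M x\<bar> \<le> (\<bar>b_seq N\<bar> + 2 ^ N) / real M"
proof -
  define B where "B = \<bar>b_seq N\<bar> + 2 ^ N"
  define n where "n = nat \<lfloor>real M * x\<rfloor>"
  have "real n = of_int \<lfloor>real M * x\<rfloor>" using assms unfolding n_def by simp
  then have n: "real n \<le> real M * x" "real M * x \<le> real n + 1" by linarith+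
  define x0 where "x0 = real n / real M"
  have diff: "x - x0 = (real M * x - real n) / real M"
    unfolding x0_def using assms by (simp add: field_simps)
  have "0 \<le> x - x0" "x - x0 \<le> 1 / real M"
    unfolding diff using n by (auto intro: divide_right_mono)
  then have x0: "0 \<le> x0" "x0 \<le> x" "x - x0 \<le> 1 / real M"
    by (auto simp: x0_def)
  have "u_constr N M x = u_constr N M x0 + integral {x0..x} (\<lambda>s. slope N (level_at N M s))"
    unfolding u_constr_def using assms x0
    by (intro Henstock_Kurzweil_Integration.integral_combine[symmetric] integrable_slope_level_at)
      auto
  also have "u_constr N M x0 = 0" unfolding x0_def using assms(1) by (rule u_constr_grid)
  finally have u: "u_constr N M x = integral {x0..x} (\<lambda>s. slope N (level_at N M s))" by simp
  have "((\<lambda>s. slope N (level_at N M s)) has_integral u_constr N M x) (cbox x0 x)"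
    unfolding u box_real(2) using assms x0
    by (intro integrable_integral integrable_slope_level_at) auto
  moreover have "norm (slope N (level_at N M s)) \<le> B" for s
    unfolding B_def level_at_def by (simp add: abs_slope_le level_le)
  ultimately have "norm (u_constr N M x) \<le> B * (x - x0)"
    using has_integral_bound[of B "\<lambda>s. slope N (level_at N M s)" "u_constr N M x" x0 x] x0(2)
    by (simp add: B_def)
  also have "\<dots> \<le> B * (1 / real M)"
    using x0 by (intro mult_left_mono) (auto simp: B_def)
  finally show ?thesis unfolding B_def by simp
qed

lemma has_real_derivative_u_constr:
  assumes "1 \<le> M" "open S" "S \<subseteq> {0..1}" "x \<in> S"
    and "\<And>t. t \<in> S \<Longrightarrow> slope N (level_at N M t) = m"
  shows "(u_constr N M has_real_derivative m) (at x)"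
proof -
  let ?g = "\<lambda>t. slope N (level_at N M t)"
  have "continuous_on S ?g"
    using assms(5) by (intro continuous_on_eq[OF continuous_on_const]) auto
  then have "isCont ?g x"
    using assms(2,4) by (simp add: continuous_on_eq_continuous_at)
  then have "continuous (at x within {0..1} - {}) ?g"
    by (rule continuous_at_imp_continuous_at_within)
  then have "((\<lambda>u. integral {0..u} ?g) has_vector_derivative ?g x) (at x within {0..1} - {})"
    using assms(3,4)
    by (intro integral_has_vector_derivative_continuous_at integrable_slope_level_at[OF assms(1)])
      auto
  moreover have "at x within {0..1} - {} = at x"
    using interior_maximal[OF assms(3,2)] assms(4) by (intro at_within_interior) auto
  ultimately show ?thesis
    using assms(4,5) unfolding u_constr_def[abs_def]
    by (simp add: has_real_derivative_iff_has_vector_derivative)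
qed

lemma open_good_set: "open (good_set N M k)"
proof -
  have "good_set N M k = {0<..<1} \<inter> {x. threshold N k < halfint_dist (real M * x)}
      \<inter> {x. halfint_dist (real M * x) < threshold N (k - 1)}"
    unfolding good_set_def by auto
  then show ?thesis
    by (simp only:) (intro open_Int open_greaterThanLessThan open_Collect_less continuous_intros)
qed

lemma open_bad_set: "open (bad_set N M)"
proof -
  have "bad_set N M = {0<..<1} \<inter> {x. threshold N 0 < halfint_dist (real M * x)}"
    unfolding bad_set_def by auto
  then show ?thesis
    by (simp only:) (intro open_Int open_greaterThanLessThan open_Collect_less continuous_intros)
qed

lemma good_set_subset: "good_set N M k \<subseteq> {0..1}"
  unfolding good_set_def by auto

lemma bad_set_subset: "bad_set N M \<subseteq> {0..1}"
  unfolding bad_set_def by auto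

lemma level_at_good_set: "k \<in> {1..N} \<Longrightarrow> x \<in> good_set N M k \<Longrightarrow> level_at N M x = k"
  unfolding good_set_def level_at_def by (intro level_eqI) auto

lemma level_at_bad_set: "x \<in> bad_set N M \<Longrightarrow> level_at N M x = 0"
  unfolding bad_set_def level_at_def by (intro level_eq_0) auto

lemma finite_breakpoints:
  assumes "1 \<le> M"
  shows "finite (breakpoints N M)"
proof -
  define g where "g = (\<lambda>(n, j, \<sigma>). (real n + 1/2 + \<sigma> * threshold N j) / real M)"
  have "{x \<in> {0..1}. \<exists>j\<le>N. halfint_dist (real M * x) = threshold N j}
      \<subseteq> g ` ({0..M} \<times> {0..N} \<times> {-1, 1})"
  proof
    fix x assume "x \<in> {x \<in> {0..1}. \<exists>j\<le>N. halfint_dist (real M * x) = threshold N j}"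
    then obtain j where x: "0 \<le> x" "x \<le> 1" and j: "j \<le> N"
      and eq: "halfint_dist (real M * x) = threshold N j" by auto
    define n where "n = nat \<lfloor>real M * x\<rfloor>"
    have "real n = of_int \<lfloor>real M * x\<rfloor>" using x unfolding n_def by simp
    then have cell: "real n \<le> real M * x" "real M * x \<le> real n + 1" "n \<le> M"
      using x mult_left_le[of x "real M"]
      by (linarith, linarith, simp add: n_def nat_le_iff floor_le_iff)
    then have "\<bar>real M * x - real n - 1/2\<bar> = threshold N j"
      using eq halfint_dist_cell[of "int n" "real M * x"] by simp
    then have "real M * x = real n + 1/2 + 1 * threshold N j
        \<or> real M * x = real n + 1/2 + (-1) * threshold N j"
      by arith
    then obtain \<sigma> :: real where "\<sigma> \<in> {-1, 1}" "real M * x = real n + 1/2 + \<sigma> * threshold N j"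
      by blast
    then show "x \<in> g ` ({0..M} \<times> {0..N} \<times> {-1, 1})"
      using assms cell j unfolding g_def
      by (intro image_eqI[of _ _ "(n, j, \<sigma>)"]) (auto simp: field_simps)
  qed
  then have "finite {x \<in> {0..1}. \<exists>j\<le>N. halfint_dist (real M * x) = threshold N j}"
    by (rule finite_subset) auto
  then show ?thesis
    unfolding breakpoints_def by simp
qed

lemma breakpoints_null: "1 \<le> M \<Longrightarrow> breakpoints N M \<in> null_sets lebesgue"
  using finite_breakpoints negligible_finite negligible_iff_null_sets by blast

lemma level_at_eq_between_breakpoints:
  assumes "0 \<le> x" "y \<le> 1" "{x<..<y} \<inter> breakpoints N M = {}" "s \<in> {x<..<y}" "t \<in> {x<..<y}"
  shows "level_at N M s = level_at N M t"
  unfolding level_at_def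
proof (rule level_eq_if_connected[of "{x<..<y}" "\<lambda>z. halfint_dist (real M * z)"])
  show "continuous_on {x<..<y} (\<lambda>z. halfint_dist (real M * z))"
    by (intro continuous_intros)
  show "halfint_dist (real M * z) \<noteq> threshold N j" if "z \<in> {x<..<y}" "j \<le> N" for z j
    using assms(1-3) that unfolding breakpoints_def by auto
qed (use assms(4,5) in auto)

lemma breakpoints_cover:
  "{0..1} = (\<Union>k\<in>{1..N}. good_set N M k) \<union> bad_set N M \<union> breakpoints N M"
proof (intro equalityI subsetI)
  fix x :: real assume x: "x \<in> {0..1}"
  show "x \<in> (\<Union>k\<in>{1..N}. good_set N M k) \<union> bad_set N M \<union> breakpoints N M"
  proof (cases "x \<in> breakpoints N M")
    case False
    define t where "t = halfint_dist (real M * x)"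
    define k where "k = level N t"
    have x01: "x \<in> {0<..<1}" and t: "\<And>j. j \<le> N \<Longrightarrow> t \<noteq> threshold N j"
      using False x unfolding breakpoints_def t_def by auto
    have "0 \<le> t" unfolding t_def by (rule halfint_dist_nonneg)
    show ?thesis
    proof (cases "threshold N 0 < t")
      case True
      then show ?thesis using x01 unfolding bad_set_def t_def by auto
    next
      case False
      have "1 \<le> N"
      proof (rule ccontr)
        assume "\<not> 1 \<le> N"
        then have "N = 0" by simp
        then show False using False t[of 0] \<open>0 \<le> t\<close> by simp
      qed
      moreover have "t < threshold N 0" using False t[of 0] by simp
      ultimately have "1 \<le> k" "t < threshold N (k - 1)"
        using level_ge_iff[of 1 N t] level_pos_imp_less[of N t] unfolding k_def by auto
      moreover have "threshold N k < t"
        using threshold_level_le[OF \<open>0 \<le> t\<close>, of N] t[of k] level_le[of N t] unfolding k_def by force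
      ultimately have "x \<in> good_set N M k" using x01 unfolding good_set_def t_def by auto
      then show ?thesis using \<open>1 \<le> k\<close> level_le[of N t] unfolding k_def by auto
    qed
  qed simp
qed (auto simp: good_set_def bad_set_def breakpoints_def)

lemma measure_good_set:
  assumes "1 \<le> M" "k \<in> {1..N}"
  shows "measure lebesgue (good_set N M k) = mu_seq k"
proof -
  have "k - 1 < N" "Suc (k - 1) = k" using assms(2) by auto
  then have step: "threshold N (k - 1) - threshold N k = mu_seq k / 2"
    using threshold_Suc[of "k - 1" N] by simp
  have "(indicator {threshold N k<..<threshold N (k - 1)} has_integral
      threshold N (k - 1) - threshold N k) {0..1/2}"
    using step mu_seq_pos[of k] assms(2) threshold_nonneg[of N k]
      threshold_antimono[of 0 "k - 1" N] threshold_zero_le[of N]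
    by (intro has_integral_indicator_between) auto
  from measure_halfint_dist_preimage[OF assms(1) open_good_set good_set_subset _ this]
  show ?thesis unfolding good_set_def step by auto
qed

lemma measure_bad_set:
  assumes "1 \<le> M"
  shows "measure lebesgue (bad_set N M) = beta_seq N"
proof -
  have "(indicator {threshold N 0<..} has_integral 1/2 - threshold N 0) {0..1/2}"
    using threshold_zero_le[of N] threshold_nonneg[of N 0]
    by (intro has_integral_indicator_between) auto
  from measure_halfint_dist_preimage[OF assms(1) open_bad_set[of N M] bad_set_subset _ this]
  have "measure lebesgue (bad_set N M) = 2 * (1/2 - threshold N 0)"
    unfolding bad_set_def by auto
  moreover have "{0<..N} = {1..N}" by auto
  then have "2 * (1/2 - threshold N 0) = beta_seq N"
    unfolding beta_seq_def threshold_def by simp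
  ultimately show ?thesis by simp
qed

lemma piecewise_affine_u_constr:
  assumes "1 \<le> M"
  shows "piecewise_affine_on 0 1 (u_constr N M)"
  unfolding piecewise_affine_on_def
proof (intro exI[of _ "breakpoints N M"] conjI ballI impI)
  fix x y
  assume "x \<in> breakpoints N M" "y \<in> breakpoints N M"
    and gap: "x < y \<and> {x<..<y} \<inter> breakpoints N M = {}"
  then have bounds: "0 \<le> x" "y \<le> 1" unfolding breakpoints_def by auto
  define m where "m = slope N (level_at N M ((x + y) / 2))"
  have "u_constr N M t = m * t + (u_constr N M x - m * x)" if "t \<in> {x..y}" for t
  proof -
    have "slope N (level_at N M s) = m" if "x < s" "s < t" for s
      using level_at_eq_between_breakpoints[OF bounds, of N M s "(x + y) / 2"] gap that \<open>t \<in> {x..y}\<close>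
      unfolding m_def by auto
    then have "u_constr N M t = u_constr N M x + m * (t - x)"
      using bounds \<open>t \<in> {x..y}\<close> by (intro u_constr_affine[OF assms]) auto
    then show ?thesis by (simp add: algebra_simps)
  qed
  then show "\<exists>m c. \<forall>t\<in>{x..y}. u_constr N M t = m * t + c" by blast
qed (use finite_breakpoints[OF assms] in \<open>auto simp: breakpoints_def\<close>)

lemma piecewise_constant_w_constr:
  assumes "1 \<le> M"
  shows "piecewise_constant_on 0 1 (w_constr N M)"
  unfolding piecewise_constant_on_def
proof (intro exI[of _ "breakpoints N M"] conjI ballI impI)
  fix x y
  assume "x \<in> breakpoints N M" "y \<in> breakpoints N M"
    and gap: "x < y \<and> {x<..<y} \<inter> breakpoints N M = {}"
  then have bounds: "0 \<le> x" "y \<le> 1" unfolding breakpoints_def by auto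
  have "w_constr N M t = w_constr N M ((x + y) / 2)" if "t \<in> {x<..<y}" for t
    using level_at_eq_between_breakpoints[OF bounds, of N M t "(x + y) / 2"] gap that
    unfolding w_constr_def by auto
  then show "\<exists>c. \<forall>t\<in>{x<..<y}. w_constr N M t = c" by blast
qed (use finite_breakpoints[OF assms] in \<open>auto simp: breakpoints_def\<close>)

lemma w_constr_pos: "0 < w_constr N M x"
  by (simp add: w_constr_def)

lemma w_constr_good_set: "k \<in> {1..N} \<Longrightarrow> x \<in> good_set N M k \<Longrightarrow> w_constr N M x = (1/2) ^ k"
  by (simp add: w_constr_def level_at_good_set)

lemma w_constr_bad_set: "x \<in> bad_set N M \<Longrightarrow> w_constr N M x = 1"
  by (simp add: w_constr_def level_at_bad_set)

lemma has_real_derivative_u_constr_good_set: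
  assumes "1 \<le> M" "k \<in> {1..N}" "x \<in> good_set N M k"
  shows "(u_constr N M has_real_derivative - (2 ^ k)) (at x)"
  using assms(2) level_at_good_set[OF assms(2)]
  by (intro has_real_derivative_u_constr[OF assms(1) open_good_set good_set_subset assms(3)])
    (auto simp: slope_def)

lemma has_real_derivative_u_constr_bad_set:
  assumes "1 \<le> M" "x \<in> bad_set N M"
  shows "(u_constr N M has_real_derivative b_seq N) (at x)"
  using level_at_bad_set[of _ N M]
  by (intro has_real_derivative_u_constr[OF assms(1) open_bad_set bad_set_subset assms(2)])
    (auto simp: slope_def)

lemma Ar_quotient_w_constr:
  assumes "1 \<le> M" "a < b" "2 < r"
  shows "Ar_quotient r (\<lambda>x. if x \<in> {0..1} then w_constr N M x else 1) a b \<le> Ar_bound r"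
proof -
  have "x \<in> {0..1} \<longleftrightarrow> real M * x \<in> {0..real M}" for x
    using assms(1) by (auto simp: zero_le_mult_iff mult_le_cancel_left1)
  then have "(\<lambda>x. if x \<in> {0..1} then w_constr N M x else 1)
      = (\<lambda>x. stretched_weight N M (real M * x))"
    unfolding w_constr_def stretched_weight_def level_at_def by auto
  moreover have "real M * a < real M * b" using assms(1,2) by simp
  ultimately show ?thesis
    using Ar_quotient_dilation[where M="real M" and W="stretched_weight N M"]
      Ar_quotient_stretched_weight assms
    by simp
qed

theorem proposition2p3:
  "\<exists>C :: real \<Rightarrow> real. \<forall>(N::nat) (\<delta>::real). N \<ge> 1 \<and> \<delta> > 0 \<longrightarrow>
     (\<exists>(OmB :: real set) (OmG :: nat \<Rightarrow> real set) (Nul :: real set)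
        (u :: real \<Rightarrow> real) (w :: real \<Rightarrow> real).
        open OmB \<and> OmB \<subseteq> {0..1} \<and>
        (\<forall>k\<in>{1..N}. open (OmG k) \<and> OmG k \<subseteq> {0..1}) \<and>
        Nul \<in> null_sets lebesgue \<and>
        {0..1} = (\<Union>k\<in>{1..N}. OmG k) \<union> OmB \<union> Nul \<and>
        piecewise_affine_on 0 1 u \<and> u 0 = 0 \<and> u 1 = 0 \<and>
        (\<forall>x\<in>{0..1}. \<bar>u x\<bar> \<le> \<delta>) \<and>
        piecewise_constant_on 0 1 w \<and> (\<forall>x\<in>{0..1}. w x > 0) \<and>
        measure lebesgue OmB = beta_seq N \<and>
        (\<forall>k\<in>{1..N}. measure lebesgue (OmG k) = mu_seq k) \<and>
        (\<forall>k\<in>{1..N}. AE x in lebesgue. x \<in> OmG k \<longrightarrow>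
            w x = (1/2) ^ k \<and> (u has_real_derivative (- (2 ^ k))) (at x)) \<and>
        (AE x in lebesgue. x \<in> OmB \<longrightarrow>
            w x = 1 \<and> (u has_real_derivative b_seq N) (at x)) \<and>
        (\<forall>r::real. r > 2 \<longrightarrow>
           (\<forall>a b::real. a < b \<longrightarrow>
              (let W = (\<lambda>x. if x \<in> {0..1} then w x else 1) in
                (integral {a..b} W / (b - a)) *
                (integral {a..b} (\<lambda>x. W x powr (- 1 / (r - 1))) / (b - a)) powr (r - 1)
                \<le> C r))))"
  apply (intro exI[of _ Ar_bound] allI impI)
  subgoal premises prems for N \<delta>
  proof -
    define M where "M = nat \<lceil>(\<bar>b_seq N\<bar> + 2 ^ N) / \<delta>\<rceil> + 1"
    have M: "1 \<le> M" unfolding M_def by simp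
    have "(\<bar>b_seq N\<bar> + 2 ^ N) / \<delta> \<le> real M" unfolding M_def by linarith
    then have "(\<bar>b_seq N\<bar> + 2 ^ N) / real M \<le> \<delta>"
      using prems M by (simp add: field_simps)
    then have small: "\<bar>u_constr N M x\<bar> \<le> \<delta>" if "x \<in> {0..1}" for x
      using abs_u_constr_le[OF M that, of N] by linarith
    note props = open_bad_set bad_set_subset open_good_set good_set_subset breakpoints_null[OF M]
      breakpoints_cover piecewise_affine_u_constr[OF M] u_constr_0 u_constr_1[OF M] small
      piecewise_constant_w_constr[OF M] w_constr_pos measure_bad_set[OF M] measure_good_set[OF M]
      w_constr_good_set has_real_derivative_u_constr_good_set[OF M]
      w_constr_bad_set has_real_derivative_u_constr_bad_set[OF M] Ar_quotient_w_constr[OF M]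
    show ?thesis
      unfolding Let_def Ar_quotient_def[symmetric]
      by (rule exI[of _ "bad_set N M"], rule exI[of _ "good_set N M"],
          rule exI[of _ "breakpoints N M"], rule exI[of _ "u_constr N M"], rule exI[of _ "w_constr N M"],
          intro conjI ballI allI impI AE_I2) (rule props | assumption)+
  qed
  done

end
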